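(* Let $S$ be an inverse monoid with identity element $1$, and let $(X,E(S),p)$ be a presheaf of geodesic metric spaces on which $S$ acts properly and coboundedly. Then: (1) there exists a finite quasi-generating set $\mathcal{M}\subseteq S$; (2) there exists $x_1\in X_1$ such that the orbit map $(S,d_{\mathcal{M}})\to (X,d)$, $s\mapsto x_1\cdot s$, is an order-preserving quasi-isometry, where $d_{\mathcal M}$ is the Cayley metric associated to $\mathcal M$.
   Context: An inverse semigroup is a semigroup $S$ in which every $s$ has a unique $s^{-1}\in S$ with $ss^{-1}s=s$ and $s^{-1}ss^{-1}=s^{-1}$; an inverse monoid is one with an identity $1$. $E(S)$ is the set of idempotents ($e e=e$); idempotents commute. The natural partial order on $S$ is $s\le t$ iff $s=et$ for some $e\in E(S)$; $E(S)$ is a meet-semilattice with meet $ef$. Write $\mathbf{d}(s)=s^{-1}s$. Green's relation $\mathcal L$: $(s,t)\in\mathcal L$ iff $s^{-1}s=t^{-1}t$. Presheaf: for a meet-semilattice $E$, a presheaf $(X,E,p)$ is a set $X$ with maps $p\colon X\to E$ and $X\times E\to X$, $(x,e)\mapsto x\cdot e$, such that $(x\cdot e)\cdot f=x\cdot ef$, $x\cdot p(x)=x$, and $p(x\cdot e)=p(x)e$. Fibers are $X_e=p^{-1}(e)$. $X$ is partially ordered by $x\le y$ iff $x=y\cdot p(x)$. A presheaf of metric spaces is such a presheaf with $p$ surjective, each fiber $X_e$ a metric space with metric $d_e$, and $d_e(x,y)\ge d_{ef}(x\cdot f,y\cdot f)$ for all $x,y\in X_e$, $f\in E$. Set $d(x,y)=d_e(x,y)$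 if $x,y\in X_e$ and $d(x,y)=\infty$ if $x,y$ lie in different fibers. It is geodesic if whenever $D=d(x,y)<\infty$ there is an isometric embedding $\gamma\colon[0,D]\to X$ with $\gamma(0)=x$, $\gamma(D)=y$. Action: $S$ acts on a presheaf of metric spaces $(X,E(S),p)$ if there is a right action $X\times S\to X$ (so $(x\cdot s)\cdot t=x\cdot(st)$) extending the presheaf map $X\times E(S)\to X$, such that $p(x\cdot s)=s^{-1}p(x)s$, and $d_e(x,y)\ge d_{s^{-1}es}(x\cdot s,y\cdot s)$ for all $x,y\in X_e$, $s\in S$. The action is proper if for every $y_1\in X_1$ and $R\ge0$ there is a finite $\mathcal C\subseteq S$ with $\{s\in S: d(y_1\cdot s,y_1\cdot s^{-1}s)\le R\}\subseteq \mathcal C E(S)=\{ce: c\in\mathcal C, e\in E(S)\}$. It is cobounded if there exist $x_1\in X_1$ and $T\ge0$ with $B(x_1,T)\cdot S=X$, where $B(x_1,T)$ is the ball in $(X,d)$. A quasi-generating set is a symmetric subset $\mathcal M=\mathcal M^{-1}\subseteq S$ such that $S$ is generated as a semigroup by $\mathcal M\cup E(S)$. The Cayley metric $d_{\mathcal M}$ on $S$: $d_{\mathcal M}(s,t)=\infty$ if $(s,t)\notin\mathcal L$; otherwise it is the path distance between $s$ and $t$ in the graph whose vertex set is the $\mathcal L$-class of $s$ and where $u,v$ are joined by an edge whenever $gu=v$ for some $g\in\mathcal M$ (edges of length 1). A map $f$ between extended metric spaces $(A,d_A)$, $(B,d_B)$ is a quasi-isometry if there are constants $L\ge1,C\ge0$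 such that $d_A(a,a')<\infty$ iff $d_B(f(a),f(a'))<\infty$, $\frac1L d_A(a,a')-C\le d_B(f(a),f(a'))\le L d_A(a,a')+C$ whenever these are finite, and every point of $B$ is within distance $C$ of $f(A)$. Order-preserving means $s\le t$ in the natural partial order implies $f(s)\le f(t)$ in the partial order of $X$. *)

theory Defs
  imports "HOL-Analysis.Analysis" "HOL-Library.Extended_Real"
begin

text \<open>The inverse monoid S is the whole carrier type 's, with the monoid structure
  given by the type class monoid_mult (multiplication and identity 1).\<close>

definition inverse_monoid :: "'s::monoid_mult itself \<Rightarrow> bool" where
  "inverse_monoid _ \<longleftrightarrow> (\<forall>s::'s. \<exists>!t. s * t * s = s \<and> t * s * t = t)"

definition sinv :: "'s::monoid_mult \<Rightarrow> 's" where
  "sinv s = (THE t. s * t * s = s \<and> t * s * t = t)"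

definition idems :: "'s::monoid_mult set" where
  "idems = {e. e * e = e}"

definition nat_le :: "'s::monoid_mult \<Rightarrow> 's \<Rightarrow> bool" where
  "nat_le s t \<longleftrightarrow> (\<exists>e\<in>idems. s = e * t)"

definition Lrel :: "'s::monoid_mult \<Rightarrow> 's \<Rightarrow> bool" where
  "Lrel s t \<longleftrightarrow> sinv s * s = sinv t * t"

text \<open>X is the carrier type 'x; p : X \<rightarrow> E(S); act is the right action of S on X
  (its restriction to idempotents is the presheaf map); d x y is the fiber metric
  d_e(x,y), meaningful only when p x = p y.\<close>

definition xdist :: "('x \<Rightarrow> 's) \<Rightarrow> ('x \<Rightarrow> 'x \<Rightarrow> real) \<Rightarrow> 'x \<Rightarrow> 'x \<Rightarrow> ereal" where
  "xdist p d x y = (if p x = p y then ereal (d x y) else \<infinity>)"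

definition xle :: "('x \<Rightarrow> 's::monoid_mult) \<Rightarrow> ('x \<Rightarrow> 's \<Rightarrow> 'x) \<Rightarrow> 'x \<Rightarrow> 'x \<Rightarrow> bool" where
  "xle p act x y \<longleftrightarrow> x = act y (p x)"

definition presheaf_metric_action ::
  "('x \<Rightarrow> 's::monoid_mult) \<Rightarrow> ('x \<Rightarrow> 's \<Rightarrow> 'x) \<Rightarrow> ('x \<Rightarrow> 'x \<Rightarrow> real) \<Rightarrow> bool" where
  "presheaf_metric_action p act d \<longleftrightarrow>
     \<comment> \<open>presheaf over E(S), p surjective onto E(S)\<close>
     range p = idems \<and>
     (\<forall>x e f. e \<in> idems \<longrightarrow> f \<in> idems \<longrightarrow> act (act x e) f = act x (e * f)) \<and>
     (\<forall>x. act x (p x) = x) \<and>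
     (\<forall>x e. e \<in> idems \<longrightarrow> p (act x e) = p x * e) \<and>
     \<comment> \<open>each fiber is a metric space\<close>
     (\<forall>x y. p x = p y \<longrightarrow> (d x y = 0 \<longleftrightarrow> x = y)) \<and>
     (\<forall>x y. p x = p y \<longrightarrow> d x y = d y x) \<and>
     (\<forall>x y z. p x = p y \<longrightarrow> p y = p z \<longrightarrow> d x z \<le> d x y + d y z) \<and>
     \<comment> \<open>restriction maps are 1-Lipschitz\<close>
     (\<forall>x y f. p x = p y \<longrightarrow> f \<in> idems \<longrightarrow> d (act x f) (act y f) \<le> d x y) \<and>
     \<comment> \<open>right action of S\<close>
     (\<forall>x s t. act (act x s) t = act x (s * t)) \<and>
     (\<forall>x s. p (act x s) = sinv s * p x * s) \<and>
     (\<forall>x y s. p x = p y \<longrightarrow> d (act x s) (act y s) \<le> d x y)"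

definition geodesic_presheaf :: "('x \<Rightarrow> 's) \<Rightarrow> ('x \<Rightarrow> 'x \<Rightarrow> real) \<Rightarrow> bool" where
  "geodesic_presheaf p d \<longleftrightarrow>
     (\<forall>x y. xdist p d x y < \<infinity> \<longrightarrow>
        (\<exists>\<gamma> :: real \<Rightarrow> 'x. \<gamma> 0 = x \<and> \<gamma> (d x y) = y \<and>
           (\<forall>a\<in>{0..d x y}. \<forall>b\<in>{0..d x y}. xdist p d (\<gamma> a) (\<gamma> b) = ereal \<bar>a - b\<bar>)))"

definition proper_action ::
  "('x \<Rightarrow> 's::monoid_mult) \<Rightarrow> ('x \<Rightarrow> 's \<Rightarrow> 'x) \<Rightarrow> ('x \<Rightarrow> 'x \<Rightarrow> real) \<Rightarrow> bool" where
  "proper_action p act d \<longleftrightarrow>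
     (\<forall>y1 R. p y1 = 1 \<longrightarrow> R \<ge> 0 \<longrightarrow>
        (\<exists>C. finite C \<and>
           {s. xdist p d (act y1 s) (act y1 (sinv s * s)) \<le> ereal R}
             \<subseteq> {c * e | c e. c \<in> C \<and> e \<in> idems}))"

definition cobounded_action ::
  "('x \<Rightarrow> 's::monoid_mult) \<Rightarrow> ('x \<Rightarrow> 's \<Rightarrow> 'x) \<Rightarrow> ('x \<Rightarrow> 'x \<Rightarrow> real) \<Rightarrow> bool" where
  "cobounded_action p act d \<longleftrightarrow>
     (\<exists>x1 T. p x1 = 1 \<and> T \<ge> 0 \<and>
        (\<forall>x. \<exists>y s. xdist p d x1 y \<le> ereal T \<and> x = act y s))"

inductive_set gen_semigroup :: "'s::monoid_mult set \<Rightarrow> 's set" for A where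
  base: "a \<in> A \<Longrightarrow> a \<in> gen_semigroup A"
| mult: "a \<in> gen_semigroup A \<Longrightarrow> b \<in> gen_semigroup A \<Longrightarrow> a * b \<in> gen_semigroup A"

definition quasi_generating :: "'s::monoid_mult set \<Rightarrow> bool" where
  "quasi_generating M \<longleftrightarrow> sinv ` M = M \<and> gen_semigroup (M \<union> idems) = UNIV"

definition cayley_path :: "'s::monoid_mult set \<Rightarrow> 's \<Rightarrow> 's \<Rightarrow> nat \<Rightarrow> bool" where
  "cayley_path M s t n \<longleftrightarrow>
     (\<exists>f :: nat \<Rightarrow> 's. f 0 = s \<and> f n = t \<and> (\<forall>i\<le>n. Lrel (f i) s) \<and>
        (\<forall>i<n. \<exists>g\<in>M. g * f i = f (Suc i) \<or> g * f (Suc i) = f i))"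

definition cayley_dist :: "'s::monoid_mult set \<Rightarrow> 's \<Rightarrow> 's \<Rightarrow> ereal" where
  "cayley_dist M s t =
     (if Lrel s t then (INF n \<in> {n. cayley_path M s t n}. ereal (real n)) else \<infinity>)"

definition quasi_isometry ::
  "('a \<Rightarrow> 'a \<Rightarrow> ereal) \<Rightarrow> ('b \<Rightarrow> 'b \<Rightarrow> ereal) \<Rightarrow> ('a \<Rightarrow> 'b) \<Rightarrow> bool" where
  "quasi_isometry dA dB f \<longleftrightarrow>
     (\<exists>L C::real. L \<ge> 1 \<and> C \<ge> 0 \<and>
        (\<forall>a a'. dA a a' < \<infinity> \<longleftrightarrow> dB (f a) (f a') < \<infinity>) \<and>
        (\<forall>a a'. dA a a' < \<infinity> \<longrightarrow>
           ereal (1 / L) * dA a a' - ereal C \<le> dB (f a) (f a') \<and>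
           dB (f a) (f a') \<le> ereal L * dA a a' + ereal C) \<and>
        (\<forall>b. \<exists>a. dB b (f a) \<le> ereal C))"

end

theory Submission
  imports Defs
begin

(*
  Take x1 over 1 and the coboundedness radius T. Then x1 s lies
  over s^-1 s, so two orbit points are at finite distance iff the elements are L-related.
  Properness for R = 2T+1 gives a finite C such that every g with d(x1 g, x1 g^-1 g) <= 2T+1 is
  c e with c in C and e idempotent; put M = C \<union> C^-1. Cutting a geodesic from x1 s to x1 t into
  n <= d + 2 pieces of length <= 1 and moving each cut point to an orbit point within T gives
  s = u_0, ..., u_n = t with consecutive orbit points (2T+1)-close, hence u_(i+1) = c u_i for some
  c in C. Conversely every Cayley edge moves the orbit point by at most the maximum over g in M of
  d(x1 g^-1 g, x1 g). Joining s^-1 s to s in this way shows that M and E(S) generate S.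
*)

section \<open>Inverse monoids\<close>

lemma mem_idems_iff: "e \<in> idems \<longleftrightarrow> e * e = e"
  by (simp add: idems_def)

locale inverse_monoid_type =
  assumes is_inverse_monoid: "inverse_monoid TYPE('s::monoid_mult)"
begin

lemma sinv_unique_ex: "\<exists>!t. (s::'s) * t * s = s \<and> t * s * t = t"
  using is_inverse_monoid unfolding inverse_monoid_def by blast

lemma mult_sinv_mult: "(s::'s) * sinv s * s = s"
  and sinv_mult_sinv: "sinv s * s * sinv s = sinv s"
  using theI'[OF sinv_unique_ex[of s]] unfolding sinv_def by auto

lemma sinv_eqI:
  assumes "(s::'s) * t * s = s" and "t * s * t = t"
  shows "sinv s = t"
  unfolding sinv_def by (rule the1_equality[OF sinv_unique_ex]) (simp add: assms)

lemma sinv_sinv [simp]: "sinv (sinv (s::'s)) = s"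
  by (rule sinv_eqI) (simp_all add: mult_sinv_mult sinv_mult_sinv)

lemma sinv_idem: "(e::'s) \<in> idems \<Longrightarrow> sinv e = e"
  by (rule sinv_eqI) (simp_all add: mem_idems_iff)

lemma sinv_mult_self_idem: "sinv (s::'s) * s \<in> idems"
  and mult_sinv_self_idem: "s * sinv s \<in> idems"
  unfolding mem_idems_iff by (metis mult.assoc mult_sinv_mult)+

lemma idems_mult_closed:
  assumes e: "(e::'s) \<in> idems" and f: "f \<in> idems"
  shows "e * f \<in> idems"
proof -
  define x where "x = sinv (e * f)"
  have x1: "e * f * x * (e * f) = e * f" and x2: "x * (e * f) * x = x"
    unfolding x_def by (rule mult_sinv_mult sinv_mult_sinv)+
  have ee: "e * (e * y) = e * y" and ff: "f * (f * y) = f * y" for y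
    using e f by (metis mem_idems_iff mult.assoc)+
  have x2': "x * (e * (f * (x * y))) = x * y" for y
    using x2 by (metis mult.assoc)
  \<comment> \<open>f x e is a second inverse of e f, so uniqueness forces x = f x e\<close>
  have "(e * f) * (f * x * e) * (e * f) = e * f"
    using x1 by (simp add: mult.assoc ee ff)
  moreover have "(f * x * e) * (e * f) * (f * x * e) = f * x * e"
    by (simp add: mult.assoc ee ff x2')
  ultimately have "sinv (e * f) = f * x * e"
    by (rule sinv_eqI)
  then have xe: "x = f * x * e"
    unfolding x_def .
  have "x * x = (f * x * e) * (f * x * e)"
    by (simp only: xe[symmetric])
  also have "\<dots> = f * (x * (e * f) * x) * e"
    by (simp add: mult.assoc)
  finally have "x \<in> idems"
    using x2 xe by (simp add: mem_idems_iff)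
  moreover have "e * f = x"
    using sinv_idem[OF \<open>x \<in> idems\<close>] by (simp add: x_def)
  ultimately show ?thesis
    by simp
qed

lemma idems_commute:
  assumes e: "(e::'s) \<in> idems" and f: "f \<in> idems"
  shows "e * f = f * e"
proof -
  have ef: "(e * f) * (e * f) = e * f" and fe: "(f * e) * (f * e) = f * e"
    using idems_mult_closed[OF e f] idems_mult_closed[OF f e] by (simp_all add: mem_idems_iff)
  have ee: "e * (e * y) = e * y" and ff: "f * (f * y) = f * y" for y
    using e f by (metis mem_idems_iff mult.assoc)+
  have "(e * f) * (f * e) * (e * f) = e * f"
    using ef by (simp add: mult.assoc ee ff)
  moreover have "(f * e) * (e * f) * (f * e) = f * e"
    using fe by (simp add: mult.assoc ee ff)
  ultimately have "sinv (e * f) = f * e"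
    by (rule sinv_eqI)
  then show ?thesis
    using sinv_idem[OF idems_mult_closed[OF e f]] by simp
qed

lemma sinv_mult: "sinv ((s::'s) * t) = sinv t * sinv s"
proof (rule sinv_eqI)
  have c: "(t * sinv t) * (sinv s * s) = (sinv s * s) * (t * sinv t)"
    by (rule idems_commute[OF mult_sinv_self_idem sinv_mult_self_idem])
  have "(s * t) * (sinv t * sinv s) * (s * t) = s * ((t * sinv t) * (sinv s * s)) * t"
    by (simp add: mult.assoc)
  also have "\<dots> = (s * sinv s * s) * (t * sinv t * t)"
    unfolding c by (simp add: mult.assoc)
  finally show "(s * t) * (sinv t * sinv s) * (s * t) = s * t"
    by (simp add: mult_sinv_mult)
  have "(sinv t * sinv s) * (s * t) * (sinv t * sinv s) = sinv t * ((sinv s * s) * (t * sinv t)) * sinv s"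
    by (simp add: mult.assoc)
  also have "\<dots> = (sinv t * t * sinv t) * (sinv s * s * sinv s)"
    unfolding c[symmetric] by (simp add: mult.assoc)
  finally show "(sinv t * sinv s) * (s * t) * (sinv t * sinv s) = sinv t * sinv s"
    by (simp add: sinv_mult_sinv)
qed

lemma Lrel_dom: "Lrel (sinv (s::'s) * s) s"
  unfolding Lrel_def using sinv_idem[OF sinv_mult_self_idem] sinv_mult_self_idem
  by (simp add: mem_idems_iff)

lemma mult_idem_eq_mult_dom:
  assumes f: "(f::'s) \<in> idems"
  shows "c * f = c * (sinv (c * f) * (c * f))"
proof -
  have "sinv (c * f) * (c * f) = f * (sinv c * c) * f"
    by (simp add: sinv_mult sinv_idem[OF f] mult.assoc)
  also have "\<dots> = sinv c * c * f"
    using idems_commute[OF f sinv_mult_self_idem, of c] f by (simp add: mult.assoc mem_idems_iff)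
  finally show ?thesis
    by (simp add: mult.assoc[symmetric] mult_sinv_mult)
qed

lemma Lrel_imp_sinv_mult_cancel:
  assumes "Lrel ((g::'s) * v) v"
  shows "sinv g * (g * v) = v"
proof -
  have dom: "sinv v * (sinv g * g) * v = sinv v * v"
    using assms unfolding Lrel_def by (simp add: sinv_mult mult.assoc)
  have "v = (v * sinv v) * (sinv g * g) * v"
    using dom mult_sinv_mult[of v] by (metis mult.assoc)
  also have "\<dots> = (sinv g * g) * (v * sinv v) * v"
    by (simp only: idems_commute[OF mult_sinv_self_idem sinv_mult_self_idem])
  also have "\<dots> = sinv g * (g * v)"
    by (metis mult.assoc mult_sinv_mult)
  finally show ?thesis
    by simp
qed

lemma nat_le_imp_eq_mult_dom:
  assumes "nat_le (s::'s) t"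
  shows "t * (sinv s * s) = s"
proof -
  obtain e where e: "e \<in> idems" and s: "s = e * t"
    using assms unfolding nat_le_def by blast
  have "t * (sinv s * s) = t * sinv t * (e * e) * t"
    by (simp add: s sinv_mult sinv_idem[OF e] mult.assoc)
  also have "\<dots> = (t * sinv t) * e * t"
    using e by (simp add: mem_idems_iff)
  also have "\<dots> = e * (t * sinv t) * t"
    by (simp only: idems_commute[OF mult_sinv_self_idem e])
  also have "\<dots> = s"
    by (metis s mult.assoc mult_sinv_mult)
  finally show ?thesis .
qed

end

section \<open>Cayley paths and quasi-isometries\<close>

lemma cayley_path_Lrel: "cayley_path M s t n \<Longrightarrow> Lrel t s"
  unfolding cayley_path_def by blast

lemma cayley_path_0: "cayley_path M s t 0 \<Longrightarrow> t = s"
  unfolding cayley_path_def by blast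

lemma cayley_path_SucE:
  assumes "cayley_path M s t (Suc n)"
  obtains v g where "cayley_path M s v n" and "g \<in> M" and "g * v = t \<or> g * t = v"
proof -
  obtain f where "f 0 = s" and ft: "f (Suc n) = t" and "\<forall>i\<le>Suc n. Lrel (f i) s"
    and edges: "\<forall>i<Suc n. \<exists>g\<in>M. g * f i = f (Suc i) \<or> g * f (Suc i) = f i"
    using assms unfolding cayley_path_def by blast
  then have "cayley_path M s (f n) n"
    unfolding cayley_path_def by auto
  with edges ft that show thesis
    by (metis lessI)
qed

lemma cayley_dist_attained:
  assumes "Lrel s t" and "cayley_path M s t n"
  obtains N where "cayley_dist M s t = ereal (real N)" and "cayley_path M s t N" and "N \<le> n"
proof -
  define N where "N = (LEAST N. cayley_path M s t N)"
  have path: "cayley_path M s t N" and "N \<le> n"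
    unfolding N_def using assms(2) by (auto intro: LeastI Least_le)
  moreover have "(INF n \<in> {n. cayley_path M s t n}. ereal (real n)) = ereal (real N)"
  proof (rule antisym)
    show "(INF n \<in> {n. cayley_path M s t n}. ereal (real n)) \<le> ereal (real N)"
      by (rule INF_lower) (simp add: path)
    show "ereal (real N) \<le> (INF n \<in> {n. cayley_path M s t n}. ereal (real n))"
      by (rule INF_greatest) (simp add: N_def Least_le)
  qed
  ultimately show thesis
    using that assms(1) unfolding cayley_dist_def by simp
qed

context inverse_monoid_type
begin

lemma cayley_path_Suc_symE:
  assumes path: "cayley_path M s t (Suc n)" and sym: "sinv ` M = M"
  obtains v g where "cayley_path M s v n" and "g \<in> M" and "t = g * (v::'s)"
proof -
  obtain v g where pv: "cayley_path M s v n" and g: "g \<in> M" and edge: "g * v = t \<or> g * t = v"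
    using cayley_path_SucE[OF path] .
  show thesis
    using edge
  proof
    assume "g * v = t"
    then show thesis
      using that pv g by simp
  next
    assume backward: "g * t = v"
    \<comment> \<open>a backward edge is a forward edge for sinv g, since g t and t lie in the same L-class\<close>
    have "Lrel (g * t) t"
      using cayley_path_Lrel[OF pv] cayley_path_Lrel[OF path] backward by (simp add: Lrel_def)
    then have "t = sinv g * v"
      using backward Lrel_imp_sinv_mult_cancel by metis
    moreover have "sinv g \<in> M"
      using g sym by blast
    ultimately show thesis
      using that pv by blast
  qed
qed

lemma cayley_path_gen_semigroup:
  assumes "cayley_path M s t n" and "sinv ` M = M" and "s \<in> gen_semigroup (M \<union> idems)"
  shows "(t::'s) \<in> gen_semigroup (M \<union> idems)"
  using assms(1)
proof (induction n arbitrary: t)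
  case 0
  then show ?case
    using cayley_path_0 assms(3) by blast
next
  case (Suc n)
  obtain v g where "cayley_path M s v n" and "g \<in> M" and "t = g * v"
    using cayley_path_Suc_symE[OF Suc.prems assms(2)] .
  then show ?case
    using Suc.IH by (blast intro: gen_semigroup.intros)
qed

lemma quasi_generatingI:
  assumes sym: "sinv ` M = M" and connected: "\<And>s::'s. \<exists>n. cayley_path M (sinv s * s) s n"
  shows "quasi_generating M"
proof -
  have "s \<in> gen_semigroup (M \<union> idems)" for s
  proof -
    obtain n where "cayley_path M (sinv s * s) s n"
      using connected by blast
    then show ?thesis
      using sym sinv_mult_self_idem by (blast intro: cayley_path_gen_semigroup gen_semigroup.base)
  qed
  then show ?thesis
    unfolding quasi_generating_def using sym by blast
qed

end

lemma quasi_isometryI: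
  fixes L C :: real
  assumes "1 \<le> L" and "0 \<le> C"
    and "\<And>a a'. dA a a' < \<infinity> \<longleftrightarrow> dB (f a) (f a') < \<infinity>"
    and "\<And>a a'. dA a a' < \<infinity> \<Longrightarrow> \<exists>r r'. dA a a' = ereal r \<and> dB (f a) (f a') = ereal r' \<and>
           r / L - C \<le> r' \<and> r' \<le> L * r + C"
    and "\<And>b. \<exists>a. dB b (f a) \<le> ereal C"
  shows "quasi_isometry dA dB f"
proof -
  have "ereal (1 / L) * dA a a' - ereal C \<le> dB (f a) (f a') \<and>
      dB (f a) (f a') \<le> ereal L * dA a a' + ereal C" if fin: "dA a a' < \<infinity>" for a a'
  proof -
    obtain r r' where "dA a a' = ereal r" "dB (f a) (f a') = ereal r'"
      "r / L - C \<le> r'" "r' \<le> L * r + C"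
      using assms(4)[OF fin] by blast
    then show ?thesis
      by simp
  qed
  then show ?thesis
    unfolding quasi_isometry_def using assms(1,2,3,5) by blast
qed

section \<open>Presheaves of metric spaces with an action\<close>

locale presheaf_action =
  fixes p :: "'x \<Rightarrow> 's::monoid_mult" and act :: "'x \<Rightarrow> 's \<Rightarrow> 'x" and d :: "'x \<Rightarrow> 'x \<Rightarrow> real"
  assumes inverse_monoid_S: "inverse_monoid TYPE('s)"
    and is_presheaf_metric_action: "presheaf_metric_action p act d"

sublocale presheaf_action \<subseteq> inverse_monoid_type
  by unfold_locales (rule inverse_monoid_S)

context presheaf_action
begin

lemma act_act: "act (act x s) t = act x (s * t)"
  using is_presheaf_metric_action unfolding presheaf_metric_action_def by simp

lemma p_act: "p (act x s) = sinv s * p x * s"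
  using is_presheaf_metric_action unfolding presheaf_metric_action_def by simp

lemma d_eq_0_iff: "p x = p y \<Longrightarrow> d x y = 0 \<longleftrightarrow> x = y"
  using is_presheaf_metric_action unfolding presheaf_metric_action_def by simp

lemma d_commute: "p x = p y \<Longrightarrow> d x y = d y x"
  using is_presheaf_metric_action unfolding presheaf_metric_action_def by simp

lemma d_triangle: "p x = p y \<Longrightarrow> p y = p z \<Longrightarrow> d x z \<le> d x y + d y z"
  using is_presheaf_metric_action unfolding presheaf_metric_action_def by simp

lemma d_act_le: "p x = p y \<Longrightarrow> d (act x s) (act y s) \<le> d x y"
  using is_presheaf_metric_action unfolding presheaf_metric_action_def by simp

lemma d_self [simp]: "d x x = 0"
  using d_eq_0_iff by simp

lemma d_nonneg:
  assumes "p x = p y"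
  shows "0 \<le> d x y"
proof -
  have "d x x \<le> d x y + d y x"
    using assms by (intro d_triangle) simp_all
  then show ?thesis
    using d_commute[OF assms] by simp
qed

lemma geodesic_chain:
  assumes geodesic: "geodesic_presheaf p d" and fibre: "p x = p y"
    and len: "d x y \<le> real n" and "0 < n"
  obtains z where "z 0 = x" and "z n = y" and "\<And>i. i \<le> n \<Longrightarrow> p (z i) = p x"
    and "\<And>i. i < n \<Longrightarrow> d (z i) (z (Suc i)) \<le> 1"
proof -
  define D where "D = d x y"
  have "xdist p d x y < \<infinity>"
    using fibre by (simp add: xdist_def)
  then obtain \<gamma> :: "real \<Rightarrow> 'x" where \<gamma>0: "\<gamma> 0 = x" and \<gamma>D: "\<gamma> D = y"
    and isometric: "\<forall>a\<in>{0..D}. \<forall>b\<in>{0..D}. xdist p d (\<gamma> a) (\<gamma> b) = ereal \<bar>a - b\<bar>"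
    using geodesic unfolding geodesic_presheaf_def D_def by blast
  have \<gamma>: "p (\<gamma> a) = p (\<gamma> b) \<and> d (\<gamma> a) (\<gamma> b) = \<bar>a - b\<bar>" if "a \<in> {0..D}" "b \<in> {0..D}" for a b
    using isometric that unfolding xdist_def by (metis PInfty_neq_ereal(1) ereal.inject)
  define h where "h = D / real n"
  have "0 \<le> D"
    unfolding D_def using d_nonneg[OF fibre] .
  then have h: "0 \<le> h" "h \<le> 1" "real n * h = D"
    using len \<open>0 < n\<close> unfolding h_def D_def by (simp_all add: divide_le_eq)
  have on_\<gamma>: "real i * h \<in> {0..D}" if "i \<le> n" for i
    using mult_right_mono[of "real i" "real n" h] that h by auto
  show thesis
  proof (rule that[of "\<lambda>i. \<gamma> (real i * h)"])
    show "\<gamma> (real 0 * h) = x" "\<gamma> (real n * h) = y"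
      using \<gamma>0 \<gamma>D h by simp_all
    show "p (\<gamma> (real i * h)) = p x" if "i \<le> n" for i
      using \<gamma>[OF on_\<gamma>[OF that], of 0] \<gamma>0 \<open>0 \<le> D\<close> by simp
    show "d (\<gamma> (real i * h)) (\<gamma> (real (Suc i) * h)) \<le> 1" if "i < n" for i
      using \<gamma>[OF on_\<gamma> on_\<gamma>, of i "Suc i"] that h by (simp add: algebra_simps)
  qed
qed

end

locale pointed_presheaf_action = presheaf_action +
  fixes x1 :: 'x
  assumes p_x1: "p x1 = 1"
begin

lemma p_orbit: "p (act x1 s) = sinv s * s"
  by (simp add: p_act p_x1)

lemma p_orbit_eq_iff: "p (act x1 s) = p (act x1 t) \<longleftrightarrow> Lrel s t"
  by (simp add: p_orbit Lrel_def)

lemma xdist_orbit: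
  "xdist p d (act x1 s) (act x1 t) = (if Lrel s t then ereal (d (act x1 s) (act x1 t)) else \<infinity>)"
  by (simp add: xdist_def p_orbit_eq_iff)

lemma orbit_mono: "nat_le s t \<Longrightarrow> xle p act (act x1 s) (act x1 t)"
  unfolding xle_def p_orbit act_act by (simp add: nat_le_imp_eq_mult_dom)

lemma orbit_dist_mult_le:
  assumes "Lrel (g * u) u"
  shows "d (act x1 u) (act x1 (g * u)) \<le> d (act x1 (sinv g * g)) (act x1 g)"
proof -
  have "act x1 u = act (act x1 (sinv g * g)) u"
    using Lrel_imp_sinv_mult_cancel[OF assms] by (simp add: act_act mult.assoc)
  moreover have "act x1 (g * u) = act (act x1 g) u"
    by (simp add: act_act)
  moreover have "p (act x1 (sinv g * g)) = p (act x1 g)"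
    using Lrel_dom p_orbit_eq_iff by blast
  ultimately show ?thesis
    using d_act_le by simp
qed

lemma orbit_dist_le_cayley_path:
  assumes "cayley_path M s t n" and "sinv ` M = M"
    and K: "\<And>g. g \<in> M \<Longrightarrow> d (act x1 (sinv g * g)) (act x1 g) \<le> K"
  shows "d (act x1 s) (act x1 t) \<le> K * real n"
  using assms(1)
proof (induction n arbitrary: t)
  case 0
  then have "t = s"
    by (rule cayley_path_0)
  then show ?case
    by simp
next
  case (Suc n)
  obtain v g where pv: "cayley_path M s v n" and g: "g \<in> M" and t: "t = g * v"
    using cayley_path_Suc_symE[OF Suc.prems assms(2)] .
  have Lv: "Lrel v s" and Lt: "Lrel t s"
    using cayley_path_Lrel pv Suc.prems by blast+
  then have "Lrel (g * v) v"
    by (simp add: t Lrel_def)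
  then have "d (act x1 v) (act x1 t) \<le> K"
    using orbit_dist_mult_le K[OF g] t by fastforce
  moreover have "d (act x1 s) (act x1 t) \<le> d (act x1 s) (act x1 v) + d (act x1 v) (act x1 t)"
    using Lv Lt by (intro d_triangle) (simp_all add: p_orbit_eq_iff Lrel_def)
  ultimately show ?case
    using Suc.IH[OF pv] by (simp add: algebra_simps)
qed

lemma orbit_jump_in_proper_set:
  assumes proper: "{s. xdist p d (act x1 s) (act x1 (sinv s * s)) \<le> ereal R}
      \<subseteq> {c * e | c e. c \<in> C \<and> e \<in> idems}"
    and L: "Lrel u v" and close: "d (act x1 u) (act x1 v) \<le> R"
  shows "\<exists>c\<in>C. c * u = v"
proof -
  define g where "g = v * sinv u"
  have gu: "g * u = v"
    using L mult_sinv_mult[of v] unfolding g_def Lrel_def by (simp add: mult.assoc)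
  have "sinv g * g = u * (sinv v * v) * sinv u"
    by (simp add: g_def sinv_mult mult.assoc)
  also have "\<dots> = u * (sinv u * u) * sinv u"
    using L by (simp only: Lrel_def)
  finally have dom_g: "sinv g * g = u * sinv u"
    by (metis mult.assoc mult_sinv_mult)
  have fibre: "p (act x1 v) = p (act x1 u)"
    using L p_orbit_eq_iff by (simp add: Lrel_def)
  have "act x1 g = act (act x1 v) (sinv u)"
    by (simp add: g_def act_act)
  moreover have "act x1 (sinv g * g) = act (act x1 u) (sinv u)"
    by (simp add: dom_g act_act)
  ultimately have "d (act x1 g) (act x1 (sinv g * g)) \<le> d (act x1 v) (act x1 u)"
    using d_act_le[OF fibre] by simp
  also have "\<dots> \<le> R"
    using close d_commute[OF fibre] by simp
  finally have "xdist p d (act x1 g) (act x1 (sinv g * g)) \<le> ereal R"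
    using Lrel_dom[of g] by (simp add: xdist_orbit Lrel_def)
  then obtain c f where c: "c \<in> C" and f: "f \<in> idems" and g: "g = c * f"
    using proper by blast
  \<comment> \<open>c agrees with g on the domain u u^-1 of g, in particular at u\<close>
  have "c * u = c * (u * sinv u * u)"
    by (simp add: mult_sinv_mult)
  also have "\<dots> = g * u"
    using mult_idem_eq_mult_dom[OF f, of c] by (simp add: g[symmetric] dom_g mult.assoc)
  finally show ?thesis
    using c gu by auto
qed

lemma cobounded_orbit_near:
  assumes cobounded: "\<And>x. \<exists>y s. xdist p d x1 y \<le> ereal T \<and> x = act y s"
  obtains w where "p (act x1 w) = p x" and "d (act x1 w) x \<le> T"
proof -
  obtain y w where y: "xdist p d x1 y \<le> ereal T" and x: "x = act y w"
    using cobounded by blast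
  have "p x1 = p y" and "d x1 y \<le> T"
    using y unfolding xdist_def by (auto split: if_splits)
  then show thesis
    using that[of w] d_act_le[of x1 y w] by (simp add: x p_act)
qed

lemma orbit_shadow_of_chain:
  fixes n :: nat
  assumes "0 \<le> T" and cobounded: "\<And>x. \<exists>y s. xdist p d x1 y \<le> ereal T \<and> x = act y s"
    and "0 < n" and z0: "z 0 = act x1 s" and zn: "z n = act x1 t"
    and z_fibre: "\<And>i. i \<le> n \<Longrightarrow> p (z i) = p (act x1 s)"
  obtains u where "u 0 = s" and "u n = t" and "\<And>i. i \<le> n \<Longrightarrow> Lrel (u i) s"
    and "\<And>i. i \<le> n \<Longrightarrow> d (act x1 (u i)) (z i) \<le> T"
proof -
  define u where "u i = (if i = 0 then s else if i = n then t
      else SOME w. p (act x1 w) = p (z i) \<and> d (act x1 w) (z i) \<le> T)" for i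
  have "Lrel (u i) s \<and> d (act x1 (u i)) (z i) \<le> T" if i_le: "i \<le> n" for i
  proof -
    consider "i = 0" | "i = n" | "0 < i" "i < n"
      using i_le by fastforce
    then show ?thesis
    proof cases
      case 1
      then show ?thesis
        using z0 \<open>0 \<le> T\<close> by (simp add: u_def Lrel_def)
    next
      case 2
      have "Lrel t s"
        using z_fibre[of n] zn p_orbit_eq_iff by simp
      then show ?thesis
        using 2 zn \<open>0 \<le> T\<close> \<open>0 < n\<close> by (simp add: u_def)
    next
      case 3
      have near: "\<exists>w. p (act x1 w) = p (z i) \<and> d (act x1 w) (z i) \<le> T"
        using cobounded_orbit_near[OF cobounded] by blast
      have "p (act x1 (u i)) = p (z i) \<and> d (act x1 (u i)) (z i) \<le> T"
        using someI_ex[OF near] 3 by (simp add: u_def)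
      then show ?thesis
        using z_fibre[OF i_le] p_orbit_eq_iff by simp
    qed
  qed
  moreover have "u 0 = s" and "u n = t"
    using \<open>0 < n\<close> by (simp_all add: u_def)
  ultimately show thesis
    using that by blast
qed

lemma cayley_path_along_geodesic:
  assumes geodesic: "geodesic_presheaf p d" and "0 \<le> T"
    and cobounded: "\<And>x. \<exists>y s. xdist p d x1 y \<le> ereal T \<and> x = act y s"
    and jump: "\<And>u v. Lrel u v \<Longrightarrow> d (act x1 u) (act x1 v) \<le> 2 * T + 1 \<Longrightarrow> \<exists>g\<in>M. g * u = v"
    and L: "Lrel s t"
  shows "cayley_path M s t (nat \<lceil>d (act x1 s) (act x1 t)\<rceil> + 1)"
proof -
  define n where "n = nat \<lceil>d (act x1 s) (act x1 t)\<rceil> + 1"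
  have fibre: "p (act x1 s) = p (act x1 t)"
    using L p_orbit_eq_iff by blast
  have len: "d (act x1 s) (act x1 t) \<le> real n"
    using real_nat_ceiling_ge[of "d (act x1 s) (act x1 t)"] by (simp add: n_def)
  have "0 < n"
    by (simp add: n_def)
  obtain z where z0: "z 0 = act x1 s" and zn: "z n = act x1 t"
    and z_fibre: "\<And>i. i \<le> n \<Longrightarrow> p (z i) = p (act x1 s)"
    and z_step: "\<And>i. i < n \<Longrightarrow> d (z i) (z (Suc i)) \<le> 1"
    using geodesic_chain[OF geodesic fibre len \<open>0 < n\<close>] by blast
  obtain u where u0: "u 0 = s" and un: "u n = t" and u_L: "\<And>i. i \<le> n \<Longrightarrow> Lrel (u i) s"
    and u_near: "\<And>i. i \<le> n \<Longrightarrow> d (act x1 (u i)) (z i) \<le> T"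
    using orbit_shadow_of_chain[OF \<open>0 \<le> T\<close> cobounded \<open>0 < n\<close> z0 zn z_fibre] by blast
  have u_fibre: "p (act x1 (u i)) = p (act x1 s)" if "i \<le> n" for i
    using u_L[OF that] p_orbit_eq_iff by blast
  have "\<exists>g\<in>M. g * u i = u (Suc i)" if "i < n" for i
  proof (rule jump)
    show "Lrel (u i) (u (Suc i))"
      using u_L[of i] u_L[of "Suc i"] that by (simp add: Lrel_def)
    have "d (act x1 (u i)) (act x1 (u (Suc i))) \<le> d (act x1 (u i)) (z i) + d (z i) (act x1 (u (Suc i)))"
      using u_fibre[of i] u_fibre[of "Suc i"] z_fibre[of i] that by (intro d_triangle) simp_all
    also have "\<dots> \<le> d (act x1 (u i)) (z i) + (d (z i) (z (Suc i)) + d (z (Suc i)) (act x1 (u (Suc i))))"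
      using u_fibre[of "Suc i"] z_fibre[of i] z_fibre[of "Suc i"] that by (simp add: d_triangle)
    also have "\<dots> \<le> T + (1 + T)"
      using u_near[of i] u_near[of "Suc i"] z_step[OF that] that
        d_commute[of "z (Suc i)" "act x1 (u (Suc i))"] u_fibre[of "Suc i"] z_fibre[of "Suc i"] by simp
    finally show "d (act x1 (u i)) (act x1 (u (Suc i))) \<le> 2 * T + 1"
      by simp
  qed
  then show ?thesis
    unfolding n_def[symmetric] cayley_path_def using u0 un u_L by blast
qed

lemma cayley_dist_comparable_orbit_dist:
  assumes sym: "sinv ` M = M"
    and K: "\<And>g. g \<in> M \<Longrightarrow> d (act x1 (sinv g * g)) (act x1 g) \<le> K"
    and paths: "\<And>s t. Lrel s t \<Longrightarrow> cayley_path M s t (nat \<lceil>d (act x1 s) (act x1 t)\<rceil> + 1)"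
    and L: "Lrel a a'"
  obtains N where "cayley_dist M a a' = ereal (real N)"
    and "real N \<le> d (act x1 a) (act x1 a') + 2" and "d (act x1 a) (act x1 a') \<le> K * real N"
proof -
  define D where "D = d (act x1 a) (act x1 a')"
  obtain N where N: "cayley_dist M a a' = ereal (real N)" and path: "cayley_path M a a' N"
    and "N \<le> nat \<lceil>D\<rceil> + 1"
    using cayley_dist_attained[OF L paths[OF L]] unfolding D_def by blast
  moreover have "0 \<le> D"
    unfolding D_def using L by (intro d_nonneg) (simp add: p_orbit_eq_iff)
  ultimately have "real N \<le> D + 2"
    by linarith
  moreover have "D \<le> K * real N"
    unfolding D_def by (rule orbit_dist_le_cayley_path[OF path sym K])
  ultimately show thesis
    using that N unfolding D_def by blast
qed

lemma orbit_map_quasi_isometry: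
  assumes "finite M" and sym: "sinv ` M = M"
    and cobounded: "\<And>x. \<exists>y s. xdist p d x1 y \<le> ereal T \<and> x = act y s"
    and paths: "\<And>s t. Lrel s t \<Longrightarrow> cayley_path M s t (nat \<lceil>d (act x1 s) (act x1 t)\<rceil> + 1)"
  shows "quasi_isometry (cayley_dist M) (xdist p d) (act x1)"
proof -
  define K where "K = Max (insert 0 ((\<lambda>g. d (act x1 (sinv g * g)) (act x1 g)) ` M))"
  have K: "d (act x1 (sinv g * g)) (act x1 g) \<le> K" if "g \<in> M" for g
    unfolding K_def using \<open>finite M\<close> that by (intro Max_ge) auto
  note comparable = cayley_dist_comparable_orbit_dist[OF sym K paths]
  define L where "L = max 1 K"
  define C where "C = max T 2"
  have "1 \<le> L" and "K \<le> L" and "T \<le> C" and "2 \<le> C"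
    unfolding L_def C_def by simp_all
  have cayley_finite_iff: "cayley_dist M a a' < \<infinity> \<longleftrightarrow> Lrel a a'" for a a'
  proof (cases "Lrel a a'")
    case True
    then obtain N where "cayley_dist M a a' = ereal (real N)"
      using comparable by blast
    then show ?thesis
      using True by simp
  next
    case False
    then show ?thesis
      by (simp add: cayley_dist_def)
  qed
  show ?thesis
  proof (rule quasi_isometryI[of L C])
    show "1 \<le> L" "0 \<le> C"
      using \<open>1 \<le> L\<close> \<open>2 \<le> C\<close> by simp_all
    show "cayley_dist M a a' < \<infinity> \<longleftrightarrow> xdist p d (act x1 a) (act x1 a') < \<infinity>" for a a'
      using cayley_finite_iff[of a a'] by (simp add: xdist_orbit)
  next
    fix a a'
    assume "cayley_dist M a a' < \<infinity>"
    then have L_aa': "Lrel a a'"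
      using cayley_finite_iff by blast
    then obtain N where N: "cayley_dist M a a' = ereal (real N)"
      and upper: "real N \<le> d (act x1 a) (act x1 a') + 2"
      and lower: "d (act x1 a) (act x1 a') \<le> K * real N"
      using comparable by blast
    have "real N / L \<le> real N / 1"
      using \<open>1 \<le> L\<close> by (intro divide_left_mono) simp_all
    moreover have "K * real N \<le> L * real N"
      using \<open>K \<le> L\<close> by (simp add: mult_right_mono)
    ultimately show "\<exists>r r'. cayley_dist M a a' = ereal r \<and> xdist p d (act x1 a) (act x1 a') = ereal r' \<and>
        r / L - C \<le> r' \<and> r' \<le> L * r + C"
      using N L_aa' upper lower \<open>2 \<le> C\<close> by (simp add: xdist_orbit)
  next
    fix x
    obtain w where "p (act x1 w) = p x" and "d (act x1 w) x \<le> T"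
      using cobounded_orbit_near[OF cobounded] .
    then have "xdist p d x (act x1 w) \<le> ereal C"
      using d_commute \<open>T \<le> C\<close> by (simp add: xdist_def)
    then show "\<exists>w. xdist p d x (act x1 w) \<le> ereal C" ..
  qed
qed

end

theorem theorem2p4:
  fixes p :: "'x \<Rightarrow> 's::monoid_mult"
    and act :: "'x \<Rightarrow> 's \<Rightarrow> 'x"
    and d :: "'x \<Rightarrow> 'x \<Rightarrow> real"
  assumes "inverse_monoid TYPE('s)"
    and "presheaf_metric_action p act d"
    and "geodesic_presheaf p d"
    and "proper_action p act d"
    and "cobounded_action p act d"
  shows "\<exists>M::'s set. finite M \<and> quasi_generating M \<and>
           (\<exists>x1. p x1 = 1 \<and>
              quasi_isometry (cayley_dist M) (xdist p d) (\<lambda>s. act x1 s) \<and>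
              (\<forall>s t. nat_le s t \<longrightarrow> xle p act (act x1 s) (act x1 t)))"
proof -
  obtain x1 T where x1: "p x1 = 1" and "0 \<le> T"
    and cobounded: "\<And>x. \<exists>y s. xdist p d x1 y \<le> ereal T \<and> x = act y s"
    using assms(5) unfolding cobounded_action_def by blast
  interpret pointed_presheaf_action p act d x1
    using assms(1,2) x1 by unfold_locales
  have "0 \<le> 2 * T + 1"
    using \<open>0 \<le> T\<close> by simp
  then obtain C where "finite C"
    and proper: "{s. xdist p d (act x1 s) (act x1 (sinv s * s)) \<le> ereal (2 * T + 1)}
      \<subseteq> {c * e | c e. c \<in> C \<and> e \<in> idems}"
    using assms(4) x1 unfolding proper_action_def by blast
  define M where "M = C \<union> sinv ` C"
  have "finite M" and sym: "sinv ` M = M"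
    unfolding M_def using \<open>finite C\<close> by (auto simp: image_Un image_image)
  have jump: "\<exists>g\<in>M. g * u = v" if "Lrel u v" and "d (act x1 u) (act x1 v) \<le> 2 * T + 1" for u v
    using orbit_jump_in_proper_set[OF proper that] unfolding M_def by blast
  have paths: "cayley_path M s t (nat \<lceil>d (act x1 s) (act x1 t)\<rceil> + 1)" if "Lrel s t" for s t
    by (rule cayley_path_along_geodesic[OF assms(3) \<open>0 \<le> T\<close> cobounded _ that]) (use jump in blast)
  have "quasi_generating M"
    using quasi_generatingI[OF sym] paths[OF Lrel_dom] by blast
  moreover have "quasi_isometry (cayley_dist M) (xdist p d) (act x1)"
    using orbit_map_quasi_isometry[OF \<open>finite M\<close> sym cobounded paths] .
  ultimately show ?thesis
    using \<open>finite M\<close> x1 orbit_mono by blast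
qed

end
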